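(* Let $n$ be a positive integer and $m = n^2+1$. Let $Q_n = (a_{i,j})_{1\le i,j\le n}$ be the $n\times n$ matrix with entries in $\mathbb{Z}/m\mathbb{Z}$ given by $a_{i,j} = j + (i-1)n$, and let $\rho(Q_n)$ be the $n\times n$ matrix whose $(i,j)$ entry is $a_{j,n-i+1}$. If $\varphi:\mathbb{Z}/m\mathbb{Z}\to\{0,1,-1\}$ is a completely multiplicative function, then $\varphi(\rho(Q_n)) = \varphi(n)\varphi(Q_n)$, where for a matrix $A=(b_{i,j})$ we write $\varphi(A) = (\varphi(b_{i,j}))$.
   Context: A function $\varphi$ on $\mathbb{Z}/m\mathbb{Z}$ is completely multiplicative if $\varphi(ab)=\varphi(a)\varphi(b)$ for all $a,b$. $\varphi$ is applied to matrices entrywise. *)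

theory Defs
  imports Main
begin

text \<open>Elements of Z/mZ are represented by integers; a function on Z/mZ is an
  int function invariant under congruence mod m.\<close>

definition mod_function :: "int \<Rightarrow> (int \<Rightarrow> 'a) \<Rightarrow> bool" where
  "mod_function m \<phi> \<longleftrightarrow> (\<forall>a b. a mod m = b mod m \<longrightarrow> \<phi> a = \<phi> b)"

definition completely_multiplicative_mod :: "int \<Rightarrow> (int \<Rightarrow> int) \<Rightarrow> bool" where
  "completely_multiplicative_mod m \<phi> \<longleftrightarrow>
     mod_function m \<phi> \<and> (\<forall>a b. \<phi> (a * b) = \<phi> a * \<phi> b)"

definition Qmat :: "nat \<Rightarrow> nat \<Rightarrow> nat \<Rightarrow> int" where
  "Qmat n i j = int j + (int i - 1) * int n"

definition rhoQ :: "nat \<Rightarrow> nat \<Rightarrow> nat \<Rightarrow> int" where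
  "rhoQ n i j = Qmat n j (n - i + 1)"

end

theory Submission
  imports Defs
begin

text \<open>Multiplying by n rotates Q_n: since n^2 \<equiv> -1 (mod n^2+1), the entry
  n (j + (i-1) n) is congruent to n - i + 1 + (j-1) n, the (i,j) entry of
  \<rho>(Q_n). Complete multiplicativity then gives \<phi>(\<rho>(Q_n)) = \<phi>(n) \<phi>(Q_n).\<close>

lemma rhoQ_eq:
  assumes "i \<le> n"
  shows "rhoQ n i j = int n - int i + 1 + (int j - 1) * int n"
  using assms by (simp add: rhoQ_def Qmat_def of_nat_diff)

lemma n_times_Qmat_eq_rhoQ_mod:
  assumes "i \<le> n"
  shows "(int n * Qmat n i j) mod (int n ^ 2 + 1) = rhoQ n i j mod (int n ^ 2 + 1)"
proof -
  have "int n * Qmat n i j = rhoQ n i j + (int i - 1) * (int n ^ 2 + 1)"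
    unfolding rhoQ_eq[OF assms] Qmat_def by (simp add: algebra_simps power2_eq_square)
  then show ?thesis by simp
qed

lemma completely_multiplicative_mod_cong:
  assumes "completely_multiplicative_mod m \<phi>" and "a mod m = b mod m"
  shows "\<phi> a = \<phi> b"
  using assms unfolding completely_multiplicative_mod_def mod_function_def by blast

lemma completely_multiplicative_mod_mult:
  assumes "completely_multiplicative_mod m \<phi>"
  shows "\<phi> (a * b) = \<phi> a * \<phi> b"
  using assms by (simp add: completely_multiplicative_mod_def)

theorem corollary2:
  fixes n :: nat and \<phi> :: "int \<Rightarrow> int"
  assumes "n \<ge> 1"
    and "completely_multiplicative_mod (int n ^ 2 + 1) \<phi>"
    and "\<forall>a. \<phi> a \<in> {0, 1, -1}"
  shows "\<forall>i \<in> {1..n}. \<forall>j \<in> {1..n}.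
           \<phi> (rhoQ n i j) = \<phi> (int n) * \<phi> (Qmat n i j)"
proof (intro ballI)
  fix i j assume "i \<in> {1..n}" "j \<in> {1..n}"
  then have "i \<le> n" by simp
  have "\<phi> (rhoQ n i j) = \<phi> (int n * Qmat n i j)"
    by (rule completely_multiplicative_mod_cong[OF assms(2)
          n_times_Qmat_eq_rhoQ_mod[OF \<open>i \<le> n\<close>, symmetric]])
  also have "\<dots> = \<phi> (int n) * \<phi> (Qmat n i j)"
    using completely_multiplicative_mod_mult[OF assms(2)] .
  finally show "\<phi> (rhoQ n i j) = \<phi> (int n) * \<phi> (Qmat n i j)" .
qed

end
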